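(* Let $A$ be a finite set and let $f\in A^A$ with $f\notin T$ be of type I, II or III. Then $M_f=\langle f\rangle\cup C$ is a minimal u-closed monoid; in particular $M_f=\overline{M_f}$. Moreover, $\mathrm{End}\,\mathrm{gQuord}\,M_f=\mathrm{End}\,\mathrm{Quord}\,M_f$.
   Context: $C$ is the set of all constant unary maps on $A$, $T=\{\mathrm{id}_A\}\cup C$, and $\langle f\rangle$ is the submonoid of $A^A$ generated by $f$. Types: (I) $f^2=f$; (II) $f^2$ is a constant $v$ and $|\{x\in A\mid fx=v\}|\ge3$; (III) $f$ is a permutation with $f^p=\mathrm{id}_A$ for some prime $p$ and $f$ has at least two cycles of length $p$. A translation of an $n$-ary operation $g$ is $x\mapsto g(a_1,\dots,a_{i-1},x,a_{i+1},\dots,a_n)$ with fixed $a_j$; $\mathrm{trl}(g)$ is the set of translations ($\{g\}$ for unary $g$); $N^*:=\{g\mid\mathrm{trl}(g)\subseteq N\}$. The u-closure $\overline M$ is the intersection of all monoids $N$ with $M\subseteq N\le A^A$ such that $N^*$ is a clone; $M$ is u-closed if $\overline M=M$. A minimal u-closed monoid is a u-closed monoid $M\le A^A$ with $T\subsetneq M$ such that every u-closed monoid properly contained in $M$ equals $T$. A relation $\rho\subseteq A^m$ is a generalized quasiorder if it is reflexive and for every $m\times m$-matrix over $A$ whose rows and columns all lie in $\rho$ the diagonal lies in $\rho$ (binary ones are exactly the quasiorders, i.e., reflexive transitive binary relations). $\mathrm{gQuord}\,M$ (resp. $\mathrm{Quord}\,M$) is the set of generalized quasiorders (resp. quasiorders)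 on $A$ preserved by all maps of $M$, and $\mathrm{End}\,Q$ is the set of all unary maps preserving every relation in $Q$. *)

theory Defs
  imports "HOL-Computational_Algebra.Primes"
begin

text \<open>The base set A is the universe of a finite type 'a. Unary maps are functions 'a => 'a.\<close>

definition constmaps :: "('a \<Rightarrow> 'a) set" where
  "constmaps = {g. \<exists>c. g = (\<lambda>_. c)}"

definition Tset :: "('a \<Rightarrow> 'a) set" where
  "Tset = insert id constmaps"

definition gen_monoid :: "('a \<Rightarrow> 'a) \<Rightarrow> ('a \<Rightarrow> 'a) set" where
  "gen_monoid f = range (\<lambda>n. f ^^ n)"

definition is_monoid :: "('a \<Rightarrow> 'a) set \<Rightarrow> bool" where
  "is_monoid N \<longleftrightarrow> id \<in> N \<and> (\<forall>g\<in>N. \<forall>h\<in>N. g \<circ> h \<in> N)"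

text \<open>Finitary operations: an n-ary operation (n >= 1) is a pair (n, g) where
  g :: (nat => 'a) => 'a depends only on the arguments with index < n.\<close>

type_synonym 'a oper = "nat \<times> ((nat \<Rightarrow> 'a) \<Rightarrow> 'a)"

definition wf_op :: "'a oper \<Rightarrow> bool" where
  "wf_op F \<longleftrightarrow> fst F \<ge> 1 \<and> (\<forall>x y. (\<forall>i<fst F. x i = y i) \<longrightarrow> snd F x = snd F y)"

definition is_clone :: "'a oper set \<Rightarrow> bool" where
  "is_clone F \<longleftrightarrow>
     (\<forall>G\<in>F. wf_op G) \<and>
     (\<forall>n i. 1 \<le> n \<and> i < n \<longrightarrow> (n, \<lambda>x. x i) \<in> F) \<and>
     (\<forall>n g m hs. (n, g) \<in> F \<and> (\<forall>i<n. (m, hs i) \<in> F)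
        \<longrightarrow> (m, \<lambda>x. g (\<lambda>i. hs i x)) \<in> F)"

definition trl :: "'a oper \<Rightarrow> ('a \<Rightarrow> 'a) set" where
  "trl F = {t. \<exists>i<fst F. \<exists>a. t = (\<lambda>x. snd F (a(i := x)))}"

definition Nstar :: "('a \<Rightarrow> 'a) set \<Rightarrow> 'a oper set" where
  "Nstar N = {F. wf_op F \<and> trl F \<subseteq> N}"

definition uclosure :: "('a \<Rightarrow> 'a) set \<Rightarrow> ('a \<Rightarrow> 'a) set" where
  "uclosure M = \<Inter>{N. M \<subseteq> N \<and> is_monoid N \<and> is_clone (Nstar N)}"

definition u_closed :: "('a \<Rightarrow> 'a) set \<Rightarrow> bool" where
  "u_closed M \<longleftrightarrow> is_monoid M \<and> uclosure M = M"

definition minimal_u_closed :: "('a \<Rightarrow> 'a) set \<Rightarrow> bool" where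
  "minimal_u_closed M \<longleftrightarrow> u_closed M \<and> Tset \<subset> M \<and>
     (\<forall>M'. u_closed M' \<and> M' \<subset> M \<longrightarrow> M' = Tset)"

definition type_I :: "('a \<Rightarrow> 'a) \<Rightarrow> bool" where
  "type_I f \<longleftrightarrow> f \<circ> f = f"

definition type_II :: "('a \<Rightarrow> 'a) \<Rightarrow> bool" where
  "type_II f \<longleftrightarrow> (\<exists>v. f \<circ> f = (\<lambda>_. v) \<and> card {x. f x = v} \<ge> 3)"

definition orbit_of :: "('a \<Rightarrow> 'a) \<Rightarrow> 'a \<Rightarrow> 'a set" where
  "orbit_of f x = {(f ^^ k) x | k. True}"

definition type_III :: "('a \<Rightarrow> 'a) \<Rightarrow> bool" where
  "type_III f \<longleftrightarrow> bij f \<and> (\<exists>p::nat. prime p \<and> f ^^ p = id \<and>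
     (\<exists>x y. card (orbit_of f x) = p \<and> card (orbit_of f y) = p \<and> orbit_of f x \<noteq> orbit_of f y))"

text \<open>Relations: an m-ary relation is (m, R) with R a set of lists of length m.\<close>

type_synonym 'a rel = "nat \<times> 'a list set"

definition gen_quasiorder :: "'a rel \<Rightarrow> bool" where
  "gen_quasiorder \<rho> \<longleftrightarrow> (let m = fst \<rho>; R = snd \<rho> in
     m \<ge> 1 \<and> (\<forall>r\<in>R. length r = m) \<and>
     (\<forall>a. replicate m a \<in> R) \<and>
     (\<forall>X :: nat \<Rightarrow> nat \<Rightarrow> 'a.
        (\<forall>i<m. map (\<lambda>j. X i j) [0..<m] \<in> R) \<and> (\<forall>j<m. map (\<lambda>i. X i j) [0..<m] \<in> R)
        \<longrightarrow> map (\<lambda>i. X i i) [0..<m] \<in> R))"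

definition preserves_rel :: "('a \<Rightarrow> 'a) \<Rightarrow> 'a rel \<Rightarrow> bool" where
  "preserves_rel f \<rho> \<longleftrightarrow> (\<forall>r\<in>snd \<rho>. map f r \<in> snd \<rho>)"

definition gQuord :: "('a \<Rightarrow> 'a) set \<Rightarrow> 'a rel set" where
  "gQuord M = {\<rho>. gen_quasiorder \<rho> \<and> (\<forall>f\<in>M. preserves_rel f \<rho>)}"

definition quasiorder :: "'a rel \<Rightarrow> bool" where
  "quasiorder \<rho> \<longleftrightarrow> fst \<rho> = 2 \<and> (\<forall>r\<in>snd \<rho>. length r = 2) \<and>
     (\<forall>a. [a, a] \<in> snd \<rho>) \<and>
     (\<forall>a b c. [a, b] \<in> snd \<rho> \<and> [b, c] \<in> snd \<rho> \<longrightarrow> [a, c] \<in> snd \<rho>)"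

definition Quord :: "('a \<Rightarrow> 'a) set \<Rightarrow> 'a rel set" where
  "Quord M = {\<rho>. quasiorder \<rho> \<and> (\<forall>f\<in>M. preserves_rel f \<rho>)}"

definition End :: "'a rel set \<Rightarrow> ('a \<Rightarrow> 'a) set" where
  "End Q = {f. \<forall>\<rho>\<in>Q. preserves_rel f \<rho>}"

end

theory Submission
  imports Defs
begin

(* For a pair (a, b), the least quasiorder preserved by M_f that contains (a, b) is the
   reflexive-transitive closure of the pairs (f^k a, f^k b).  Hence every unary map h preserving
   all quasiorders of M_f sends (a, b) into this closure.  For types I and II every power of f is
   f or constant, so the closure has at most the two edges (a, b) and (f a, f b); this forces a
   non-constant h to pick h x from {x, f x} in a compatible way, and a short case analysis leaves
   only id and f.  For type III the edges between two disjoint orbits never chain, so h agrees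
   with a power of f on any two disjoint orbits, and the two cycles of length p glue these powers
   into a single one.  Thus M_f = End Quord M_f.  The operations all of whose translations
   preserve a set of quasiorders form a clone, so M_f is u-closed, and End gQuord M_f equals
   End Quord M_f because every quasiorder is a generalized quasiorder.  Minimality holds because
   every element of M_f outside T generates f. *)

section \<open>Powers of a permutation of prime order\<close>

lemma funpow_mod_eq_id:
  assumes "f ^^ p = id"
  shows "f ^^ (m mod p) = f ^^ m"
  by (rule ext, rule funpow_mod_eq) (simp add: assms)

lemma funpow_fixed_point:
  assumes "f x = x"
  shows "(f ^^ n) x = x"
  using assms by (induction n) auto

lemma funpow_generates_prime_order:
  assumes "prime p" "f ^^ p = id" "f ^^ k \<noteq> id"
  shows "\<exists>j. (f ^^ k) ^^ j = f"
proof -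
  have "\<not> p dvd k"
    using assms(2,3) funpow_mod_eq_id[OF assms(2), of k] by auto
  then have "gcd k p = 1"
    using assms(1) prime_imp_coprime_nat coprime_commute coprime_iff_gcd_eq_1 by metis
  moreover have "k \<noteq> 0"
    using assms(3) by auto
  ultimately obtain x y where "k * x = p * y + 1"
    using bezout_nat[of k p] by auto
  then have "(k * x) mod p = 1"
    using prime_gt_1_nat[OF assms(1)] by (simp add: mod_Suc)
  then have "(f ^^ k) ^^ x = f"
    using funpow_mod_eq_id[OF assms(2), of "k * x"] by (simp add: funpow_mult)
  then show ?thesis ..
qed

lemma funpow_eq_if_agree_at_moved_point:
  assumes "prime p" "f ^^ p = id" "f w \<noteq> w" "(f ^^ k) w = (f ^^ l) w"
  shows "f ^^ k = f ^^ l"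
proof -
  have "f ^^ (p - 1) \<circ> f = id"
    using assms(1,2) by (metis Suc_diff_1 funpow_Suc_right prime_gt_0_nat)
  then have "inj f"
    using inj_on_imageI2 by (metis inj_on_id)
  have le_case: "f ^^ k = f ^^ l" if le: "k \<le> l" and eq: "(f ^^ k) w = (f ^^ l) w" for k l
  proof -
    have split: "f ^^ l = f ^^ k \<circ> f ^^ (l - k)"
      using le by (simp flip: funpow_add)
    then have fixed: "(f ^^ (l - k)) w = w"
      using eq \<open>inj f\<close> by (metis comp_apply inj_eq inj_fn)
    have "f ^^ (l - k) = id"
    proof (rule ccontr)
      assume "f ^^ (l - k) \<noteq> id"
      then obtain j where "(f ^^ (l - k)) ^^ j = f"
        using funpow_generates_prime_order[OF assms(1,2)] by blast
      then have "f w = w"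
        using funpow_fixed_point[of "f ^^ (l - k)" w j, OF fixed] by simp
      with assms(3) show False ..
    qed
    then show ?thesis
      using split by simp
  qed
  show ?thesis
  proof (cases "k \<le> l")
    case True
    then show ?thesis using le_case assms(4) by blast
  next
    case False
    then show ?thesis using le_case[of l k] assms(4) by simp
  qed
qed

lemma orbit_of_sym:
  assumes "f ^^ p = id" "0 < p" "y \<in> orbit_of f x"
  shows "x \<in> orbit_of f y"
proof -
  obtain k where k: "y = (f ^^ k) x"
    using assms(3) unfolding orbit_of_def by blast
  have "x = (f ^^ (p * k)) x"
    using assms(1) by (metis funpow_mult id_apply id_funpow)
  also have "p * k = (p - 1) * k + k"
    using assms(2) by (simp add: diff_mult_distrib)
  also have "(f ^^ ((p - 1) * k + k)) x = (f ^^ ((p - 1) * k)) y"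
    using k by (simp only: funpow_add comp_apply)
  finally show ?thesis
    unfolding orbit_of_def by blast
qed

lemma orbit_of_trans:
  assumes "y \<in> orbit_of f x" "z \<in> orbit_of f y"
  shows "z \<in> orbit_of f x"
proof -
  obtain i j where "y = (f ^^ i) x" "z = (f ^^ j) y"
    using assms unfolding orbit_of_def by blast
  then have "z = (f ^^ (j + i)) x"
    by (simp add: funpow_add)
  then show ?thesis
    unfolding orbit_of_def by blast
qed

lemma orbit_of_eq_if_Int:
  assumes "f ^^ p = id" "0 < p" "orbit_of f x \<inter> orbit_of f y \<noteq> {}"
  shows "orbit_of f x = orbit_of f y"
proof -
  obtain z where z: "z \<in> orbit_of f x" "z \<in> orbit_of f y"
    using assms(3) by blast
  have "y \<in> orbit_of f x"
    using orbit_of_trans[OF z(1) orbit_of_sym[OF assms(1,2) z(2)]] .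
  moreover have "x \<in> orbit_of f y"
    using orbit_of_trans[OF z(2) orbit_of_sym[OF assms(1,2) z(1)]] .
  ultimately show ?thesis
    using orbit_of_trans by (meson subsetI subset_antisym)
qed

lemma orbit_of_fixed_point: "f w = w \<Longrightarrow> orbit_of f w = {w}"
  unfolding orbit_of_def using funpow_fixed_point[of f w] by auto

section \<open>Monoids, quasiorders and clones\<close>

lemma constmaps_iff: "g \<in> constmaps \<longleftrightarrow> (\<forall>x y. g x = g y)"
proof
  assume "\<forall>x y. g x = g y"
  then have "g = (\<lambda>_. g undefined)"
    by auto
  then show "g \<in> constmaps"
    unfolding constmaps_def by blast
qed (auto simp: constmaps_def)

lemma funpow_in_monoid: "is_monoid N \<Longrightarrow> g \<in> N \<Longrightarrow> g ^^ n \<in> N"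
  unfolding is_monoid_def by (induction n) (simp_all add: id_def)

lemma gen_monoid_subset: "is_monoid N \<Longrightarrow> f \<in> N \<Longrightarrow> gen_monoid f \<subseteq> N"
  unfolding gen_monoid_def using funpow_in_monoid by blast

lemma is_monoid_gen_monoid: "is_monoid (gen_monoid f)"
  unfolding is_monoid_def gen_monoid_def
proof (intro conjI ballI)
  show "id \<in> range (\<lambda>n. f ^^ n)"
    using rangeI[of "\<lambda>n. f ^^ n" 0] by simp
  fix g h assume "g \<in> range (\<lambda>n. f ^^ n)" "h \<in> range (\<lambda>n. f ^^ n)"
  then obtain i j where "g = f ^^ i" "h = f ^^ j"
    by blast
  then have "g \<circ> h = f ^^ (i + j)"
    by (simp add: funpow_add)
  then show "g \<circ> h \<in> range (\<lambda>n. f ^^ n)"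
    by simp
qed

lemma comp_in_constmaps: "g \<in> constmaps \<or> h \<in> constmaps \<Longrightarrow> g \<circ> h \<in> constmaps"
  unfolding constmaps_iff by (auto intro: arg_cong)

lemma is_monoid_Un_constmaps: "is_monoid N \<Longrightarrow> is_monoid (N \<union> constmaps)"
  unfolding is_monoid_def using comp_in_constmaps by blast

lemma quasiorder_refl: "quasiorder \<rho> \<Longrightarrow> [a, a] \<in> snd \<rho>"
  unfolding quasiorder_def by blast

lemma quasiorder_trans:
  "quasiorder \<rho> \<Longrightarrow> [a, b] \<in> snd \<rho> \<Longrightarrow> [b, c] \<in> snd \<rho> \<Longrightarrow> [a, c] \<in> snd \<rho>"
  unfolding quasiorder_def by blast

lemma quasiorder_pair:
  assumes "quasiorder \<rho>" "r \<in> snd \<rho>"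
  obtains x y where "r = [x, y]"
proof -
  have "length r = 2"
    using assms unfolding quasiorder_def by blast
  then show ?thesis
    using that by (auto simp: numeral_2_eq_2 length_Suc_conv)
qed

lemma preserves_quasiorder_iff:
  assumes "quasiorder \<rho>"
  shows "preserves_rel t \<rho> \<longleftrightarrow> (\<forall>x y. [x, y] \<in> snd \<rho> \<longrightarrow> [t x, t y] \<in> snd \<rho>)"
proof
  assume pairs: "\<forall>x y. [x, y] \<in> snd \<rho> \<longrightarrow> [t x, t y] \<in> snd \<rho>"
  show "preserves_rel t \<rho>"
    unfolding preserves_rel_def
  proof
    fix r assume "r \<in> snd \<rho>"
    moreover obtain x y where "r = [x, y]"
      using quasiorder_pair[OF assms \<open>r \<in> snd \<rho>\<close>] .
    ultimately show "map t r \<in> snd \<rho>"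
      using pairs by simp
  qed
qed (auto simp: preserves_rel_def)

lemma Tset_preserves_quasiorder:
  assumes "quasiorder \<rho>" "t \<in> Tset"
  shows "preserves_rel t \<rho>"
  using assms quasiorder_refl[OF assms(1)]
  unfolding Tset_def constmaps_def preserves_quasiorder_iff[OF assms(1)] by auto

lemma quasiorder_imp_gen_quasiorder:
  assumes "quasiorder \<rho>"
  shows "gen_quasiorder \<rho>"
proof -
  have two: "fst \<rho> = 2"
    using assms unfolding quasiorder_def by blast
  have upt: "[0..<2] = [0::nat, 1]"
    by (simp add: upt_rec)
  have rep: "replicate 2 a = [a, a]" for a :: 'a
    by (simp add: numeral_2_eq_2)
  show ?thesis
    unfolding gen_quasiorder_def Let_def two upt rep
  proof (intro conjI allI impI)
    fix X :: "nat \<Rightarrow> nat \<Rightarrow> 'a"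
    assume "(\<forall>i<2. map (X i) [0, 1] \<in> snd \<rho>) \<and> (\<forall>j<2. map (\<lambda>i. X i j) [0, 1] \<in> snd \<rho>)"
    then have "[X 0 0, X 0 1] \<in> snd \<rho>" "[X 0 1, X 1 1] \<in> snd \<rho>"
      by simp_all
    then show "map (\<lambda>i. X i i) [0, 1] \<in> snd \<rho>"
      using quasiorder_trans[OF assms] by simp
  qed (use assms in \<open>auto simp: quasiorder_def\<close>)
qed

lemma End_gQuord_eq_End_Quord:
  assumes "End (Quord M) \<subseteq> M"
  shows "End (gQuord M) = End (Quord M)"
proof -
  have "Quord M \<subseteq> gQuord M"
    unfolding Quord_def gQuord_def using quasiorder_imp_gen_quasiorder by blast
  then have "End (gQuord M) \<subseteq> End (Quord M)"
    unfolding End_def by blast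
  moreover have "M \<subseteq> End (gQuord M)"
    unfolding End_def gQuord_def by blast
  ultimately show ?thesis
    using assms by blast
qed

lemma Tset_subset_End: "\<forall>\<rho>\<in>Q. quasiorder \<rho> \<Longrightarrow> Tset \<subseteq> End Q"
  unfolding End_def using Tset_preserves_quasiorder by blast

lemma wf_op_cong: "wf_op (n, g) \<Longrightarrow> (\<And>i. i < n \<Longrightarrow> x i = y i) \<Longrightarrow> g x = g y"
  unfolding wf_op_def by simp

lemma translation_in_trl: "i < n \<Longrightarrow> (\<lambda>x. g (a(i := x))) \<in> trl (n, g)"
  unfolding trl_def by auto

(* Change the arguments one coordinate at a time: each change is a translation, and
   transitivity chains the steps. *)
lemma op_preserves_quasiorder:
  assumes qo: "quasiorder \<rho>" and wf: "wf_op (n, g)"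
    and trl: "\<forall>t\<in>trl (n, g). preserves_rel t \<rho>" and uw: "\<forall>i<n. [u i, w i] \<in> snd \<rho>"
  shows "[g u, g w] \<in> snd \<rho>"
proof -
  define v where "v k = (\<lambda>i. if i < k then w i else u i)" for k
  have steps: "[g u, g (v k)] \<in> snd \<rho>" if "k \<le> n" for k
    using that
  proof (induction k)
    case 0
    then show ?case
      using quasiorder_refl[OF qo] by (simp add: v_def)
  next
    case (Suc k)
    have "preserves_rel (\<lambda>x. g ((v k)(k := x))) \<rho>"
      using trl translation_in_trl[of k n g "v k"] Suc.prems by simp
    then have "[g ((v k)(k := u k)), g ((v k)(k := w k))] \<in> snd \<rho>"
      using uw Suc.prems preserves_quasiorder_iff[OF qo] by simp
    moreover have "(v k)(k := u k) = v k" "(v k)(k := w k) = v (Suc k)"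
      by (auto simp: v_def)
    ultimately show ?case
      using quasiorder_trans[OF qo] Suc by simp
  qed
  have "g (v n) = g w"
    by (rule wf_op_cong[OF wf]) (simp add: v_def)
  then show ?thesis
    using steps[of n] by simp
qed

lemma projection_in_Nstar_End:
  assumes "\<forall>\<rho>\<in>Q. quasiorder \<rho>" "1 \<le> n" "i < n"
  shows "(n, \<lambda>x. x i) \<in> Nstar (End Q)"
proof -
  have "trl (n, \<lambda>x. x i) \<subseteq> Tset"
  proof
    fix t assume "t \<in> trl (n, \<lambda>x. x i)"
    then obtain j a where "t = (\<lambda>x. (a(j := x)) i)"
      unfolding trl_def by auto
    then have "t = id \<or> t = (\<lambda>_. a i)"
      by (cases "j = i") auto
    then show "t \<in> Tset"
      unfolding Tset_def constmaps_def by blast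
  qed
  then show ?thesis
    using assms Tset_subset_End[OF assms(1)] unfolding Nstar_def wf_op_def by auto
qed

lemma wf_op_composition:
  assumes g: "wf_op (n, g)" and hs: "\<And>i. i < n \<Longrightarrow> wf_op (m, hs i)"
  shows "wf_op (m, \<lambda>x. g (\<lambda>i. hs i x))"
proof -
  have "0 < n"
    using g unfolding wf_op_def by simp
  then have "1 \<le> m"
    using hs[of 0] unfolding wf_op_def by simp
  show ?thesis
    unfolding wf_op_def fst_conv snd_conv
  proof (intro conjI allI impI)
    fix x y :: "nat \<Rightarrow> 'a" assume xy: "\<forall>i<m. x i = y i"
    have "hs i x = hs i y" if "i < n" for i
      by (rule wf_op_cong[OF hs[OF that]]) (use xy in blast)
    then show "g (\<lambda>i. hs i x) = g (\<lambda>i. hs i y)"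
      by (rule wf_op_cong[OF g])
  qed (rule \<open>1 \<le> m\<close>)
qed

lemma composition_translation_preserves_quasiorder:
  assumes qo: "quasiorder \<rho>" and wf: "wf_op (n, g)"
    and g_pres: "\<forall>s\<in>trl (n, g). preserves_rel s \<rho>"
    and hs_pres: "\<And>i. i < n \<Longrightarrow> \<forall>s\<in>trl (m, hs i). preserves_rel s \<rho>"
    and "j < m"
  shows "preserves_rel (\<lambda>z. g (\<lambda>i. hs i (a(j := z)))) \<rho>"
  unfolding preserves_quasiorder_iff[OF qo]
proof (intro allI impI)
  fix x y assume xy: "[x, y] \<in> snd \<rho>"
  have "preserves_rel (\<lambda>z. hs i (a(j := z))) \<rho>" if "i < n" for i
    using hs_pres[OF that] translation_in_trl[OF \<open>j < m\<close>] by blast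
  then have "\<forall>i<n. [hs i (a(j := x)), hs i (a(j := y))] \<in> snd \<rho>"
    using xy preserves_quasiorder_iff[OF qo] by simp
  from op_preserves_quasiorder[OF qo wf g_pres this]
  show "[g (\<lambda>i. hs i (a(j := x))), g (\<lambda>i. hs i (a(j := y)))] \<in> snd \<rho>" .
qed

lemma composition_in_Nstar_End:
  assumes qo: "\<forall>\<rho>\<in>Q. quasiorder \<rho>"
    and g: "(n, g) \<in> Nstar (End Q)" and hs: "\<forall>i<n. (m, hs i) \<in> Nstar (End Q)"
  shows "(m, \<lambda>x. g (\<lambda>i. hs i x)) \<in> Nstar (End Q)"
proof -
  have wf_g: "wf_op (n, g)" and wf_hs: "\<And>i. i < n \<Longrightarrow> wf_op (m, hs i)"
    using g hs unfolding Nstar_def by simp_all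
  have "t \<in> End Q" if "t \<in> trl (m, \<lambda>x. g (\<lambda>i. hs i x))" for t
  proof -
    obtain j a where "j < m" and t: "t = (\<lambda>z. g (\<lambda>i. hs i (a(j := z))))"
      using \<open>t \<in> trl _\<close> unfolding trl_def fst_conv snd_conv mem_Collect_eq by blast
    have "preserves_rel t \<rho>" if "\<rho> \<in> Q" for \<rho>
      unfolding t
    proof (rule composition_translation_preserves_quasiorder[OF _ wf_g _ _ \<open>j < m\<close>])
      show "quasiorder \<rho>"
        using qo that by blast
      show "\<forall>s\<in>trl (n, g). preserves_rel s \<rho>"
        using g that unfolding Nstar_def End_def by blast
      show "\<forall>s\<in>trl (m, hs i). preserves_rel s \<rho>" if "i < n" for i
        using hs \<open>i < n\<close> \<open>\<rho> \<in> Q\<close> unfolding Nstar_def End_def by blast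
    qed
    then show ?thesis
      unfolding End_def by blast
  qed
  moreover have "wf_op (m, \<lambda>x. g (\<lambda>i. hs i x))"
    using wf_g wf_hs by (rule wf_op_composition)
  ultimately show ?thesis
    unfolding Nstar_def by blast
qed

lemma is_clone_Nstar_End:
  assumes "\<forall>\<rho>\<in>Q. quasiorder \<rho>"
  shows "is_clone (Nstar (End Q))"
  unfolding is_clone_def
proof (intro conjI allI impI ballI)
  fix G assume "G \<in> Nstar (End Q)"
  then show "wf_op G"
    unfolding Nstar_def by blast
next
  fix n i :: nat assume "1 \<le> n \<and> i < n"
  then show "(n, \<lambda>x. x i) \<in> Nstar (End Q)"
    using projection_in_Nstar_End[OF assms] by blast
next
  fix n g m hs assume "(n, g) \<in> Nstar (End Q) \<and> (\<forall>i<n. (m, hs i) \<in> Nstar (End Q))"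
  then show "(m, \<lambda>x. g (\<lambda>i. hs i x)) \<in> Nstar (End Q)"
    using composition_in_Nstar_End[OF assms] by blast
qed

lemma constmaps_subset_if_is_clone:
  assumes "is_clone (Nstar N)"
  shows "constmaps \<subseteq> N"
proof
  fix c :: "'a \<Rightarrow> 'a" assume "c \<in> constmaps"
  then obtain v where c: "c = (\<lambda>_. v)"
    unfolding constmaps_def by blast
  have "(2, \<lambda>x. x (0::nat)) \<in> Nstar N"
    using assms unfolding is_clone_def by auto
  moreover have "(\<lambda>z. ((\<lambda>_. v)(1 := z)) (0::nat)) \<in> trl (2, \<lambda>x::nat \<Rightarrow> 'a. x 0)"
    by (rule translation_in_trl) simp
  then have "c \<in> trl (2, \<lambda>x::nat \<Rightarrow> 'a. x 0)"
    by (simp add: c)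
  ultimately show "c \<in> N"
    unfolding Nstar_def by blast
qed

lemma uclosure_eq_if_is_clone:
  assumes "is_monoid M" "is_clone (Nstar M)"
  shows "uclosure M = M"
proof
  show "uclosure M \<subseteq> M"
    unfolding uclosure_def using assms by (intro Inter_lower) blast
  show "M \<subseteq> uclosure M"
    unfolding uclosure_def by (intro Inter_greatest) blast
qed

lemma Tset_subset_if_u_closed:
  assumes "u_closed M"
  shows "Tset \<subseteq> M"
proof -
  have "constmaps \<subseteq> uclosure M"
    unfolding uclosure_def using constmaps_subset_if_is_clone by blast
  then show ?thesis
    using assms unfolding u_closed_def is_monoid_def Tset_def by blast
qed

section \<open>The quasiorder generated by the orbit of a pair\<close>

abbreviation Mf :: "('a \<Rightarrow> 'a) \<Rightarrow> ('a \<Rightarrow> 'a) set" where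
  "Mf f \<equiv> gen_monoid f \<union> constmaps"

definition orbit_edges :: "('a \<Rightarrow> 'a) \<Rightarrow> 'a \<Rightarrow> 'a \<Rightarrow> ('a \<times> 'a) set" where
  "orbit_edges f a b = {((f ^^ k) a, (f ^^ k) b) | k. (f ^^ k) a \<noteq> (f ^^ k) b}"

(* The least quasiorder preserved by M_f that contains (a, b). *)
definition orbit_qord :: "('a \<Rightarrow> 'a) \<Rightarrow> 'a \<Rightarrow> 'a \<Rightarrow> 'a rel" where
  "orbit_qord f a b = (2, {[x, y] | x y. (x, y) \<in> (orbit_edges f a b)\<^sup>*})"

lemma funpow_orbit_edges:
  assumes "(x, y) \<in> orbit_edges f a b"
  shows "((f ^^ n) x, (f ^^ n) y) \<in> (orbit_edges f a b)\<^sup>*"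
proof -
  obtain k where k: "x = (f ^^ k) a" "y = (f ^^ k) b"
    using assms unfolding orbit_edges_def by blast
  show ?thesis
  proof (cases "(f ^^ n) x = (f ^^ n) y")
    case False
    moreover have "(f ^^ n) x = (f ^^ (n + k)) a" "(f ^^ n) y = (f ^^ (n + k)) b"
      using k by (simp_all add: funpow_add)
    ultimately have "((f ^^ n) x, (f ^^ n) y) \<in> orbit_edges f a b"
      unfolding orbit_edges_def by auto
    then show ?thesis ..
  qed simp
qed

lemma funpow_rtrancl_orbit_edges:
  assumes "(x, y) \<in> (orbit_edges f a b)\<^sup>*"
  shows "((f ^^ n) x, (f ^^ n) y) \<in> (orbit_edges f a b)\<^sup>*"
  using assms
proof induction
  case (step y z)
  then show ?case
    using funpow_orbit_edges rtrancl_trans by metis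
qed simp

lemma orbit_qord_in_Quord: "orbit_qord f a b \<in> Quord (Mf f)"
proof -
  have qo: "quasiorder (orbit_qord f a b)"
    unfolding quasiorder_def orbit_qord_def by (auto intro: rtrancl_trans)
  have "preserves_rel g (orbit_qord f a b)" if g_in: "g \<in> Mf f" for g
  proof (cases "g \<in> constmaps")
    case True
    then show ?thesis
      using Tset_preserves_quasiorder[OF qo] unfolding Tset_def by blast
  next
    case False
    then obtain n where "g = f ^^ n"
      using g_in unfolding gen_monoid_def by blast
    then show ?thesis
      unfolding preserves_quasiorder_iff[OF qo]
      using funpow_rtrancl_orbit_edges by (auto simp: orbit_qord_def)
  qed
  with qo show ?thesis
    unfolding Quord_def by blast
qed

lemma End_Quord_pair_in_rtrancl:
  assumes "h \<in> End (Quord (Mf f))"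
  shows "(h a, h b) \<in> (orbit_edges f a b)\<^sup>*"
proof -
  have "(a, b) \<in> (orbit_edges f a b)\<^sup>*"
  proof (cases "a = b")
    case False
    then have "(a, b) \<in> orbit_edges f a b"
      unfolding orbit_edges_def by (auto intro: exI[of _ 0])
    then show ?thesis ..
  qed simp
  then have "[a, b] \<in> snd (orbit_qord f a b)"
    unfolding orbit_qord_def by simp
  moreover have "preserves_rel h (orbit_qord f a b)"
    using assms orbit_qord_in_Quord[of f a b] unfolding End_def by simp
  ultimately have "map h [a, b] \<in> snd (orbit_qord f a b)"
    unfolding preserves_rel_def by blast
  then show ?thesis
    unfolding orbit_qord_def by simp
qed

lemma End_Quord_apply_eq_funpow:
  assumes "h \<in> End (Quord (Mf f))" "h a \<noteq> h b"
  shows "\<exists>k. h a = (f ^^ k) a \<and> (f ^^ k) a \<noteq> (f ^^ k) b"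
  using End_Quord_pair_in_rtrancl[OF assms(1), of a b] assms(2)
  by (cases rule: converse_rtranclE) (auto simp: orbit_edges_def)

lemma End_Quord_apply_in_orbit:
  assumes "h \<in> End (Quord (Mf f))" "h \<notin> constmaps"
  shows "h a \<in> orbit_of f a"
proof -
  obtain b where "h a \<noteq> h b"
    using assms(2) unfolding constmaps_iff by metis
  then show ?thesis
    using End_Quord_apply_eq_funpow[OF assms(1)] unfolding orbit_of_def by blast
qed

section \<open>Types I and II\<close>

definition powers_f_or_const :: "('a \<Rightarrow> 'a) \<Rightarrow> bool" where
  "powers_f_or_const f \<longleftrightarrow> (\<forall>k>0. f ^^ k = f \<or> f ^^ k \<in> constmaps)"

lemma orbit_edges_subset_if_powers_f_or_const:
  assumes "powers_f_or_const f"
  shows "orbit_edges f a b \<subseteq> {(a, b), (f a, f b)}"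
proof
  fix e assume "e \<in> orbit_edges f a b"
  then obtain k where e: "e = ((f ^^ k) a, (f ^^ k) b)" and ne: "(f ^^ k) a \<noteq> (f ^^ k) b"
    unfolding orbit_edges_def by blast
  have "f ^^ k = id \<or> f ^^ k = f"
    using assms ne unfolding powers_f_or_const_def constmaps_iff by (cases k) auto
  then show "e \<in> {(a, b), (f a, f b)}"
    using e by auto
qed

lemma rtrancl_two_edges:
  assumes "(x, y) \<in> R\<^sup>*" "R \<subseteq> {(a, b), (c, d)}"
  shows "x = y \<or> (x, y) = (a, b) \<or> (x, y) = (c, d) \<or>
    (x = a \<and> b = c \<and> y = d) \<or> (x = c \<and> d = a \<and> y = b)"
  using assms(1)
proof induction
  case (step y z)
  then show ?case
    using assms(2) by blast
qed simp

definition compatible_selector :: "('a \<Rightarrow> 'a) \<Rightarrow> ('a \<Rightarrow> 'a) \<Rightarrow> bool" where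
  "compatible_selector f h \<longleftrightarrow> (\<forall>x. h x = x \<or> h x = f x) \<and>
     (\<forall>c d. h c = c \<longrightarrow> h d = f d \<longrightarrow> c = f d \<or> d = f c \<or> f c = c \<or> f d = d)"

lemma End_Quord_compatible_selector:
  assumes "powers_f_or_const f" "h \<in> End (Quord (Mf f))" "h \<notin> constmaps"
  shows "compatible_selector f h"
  unfolding compatible_selector_def
proof (intro conjI allI impI)
  fix x
  obtain y where "h x \<noteq> h y"
    using assms(3) unfolding constmaps_iff by metis
  then show "h x = x \<or> h x = f x"
    using rtrancl_two_edges[OF End_Quord_pair_in_rtrancl[OF assms(2)]
        orbit_edges_subset_if_powers_f_or_const[OF assms(1)]]
    by blast
next
  fix c d assume "h c = c" "h d = f d"
  then show "c = f d \<or> d = f c \<or> f c = c \<or> f d = d"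
    using rtrancl_two_edges[OF End_Quord_pair_in_rtrancl[OF assms(2), of c d]
        orbit_edges_subset_if_powers_f_or_const[OF assms(1)]]
    by auto
qed

lemma End_Quord_subset_if_compatible_selectors_trivial:
  assumes "powers_f_or_const f" "\<And>h. compatible_selector f h \<Longrightarrow> h = id \<or> h = f"
  shows "End (Quord (Mf f)) \<subseteq> Mf f"
proof
  fix h assume h: "h \<in> End (Quord (Mf f))"
  show "h \<in> Mf f"
  proof (cases "h \<in> constmaps")
    case False
    then have "h = f ^^ 0 \<or> h = f ^^ 1"
      using assms(2) End_Quord_compatible_selector[OF assms(1) h] by simp
    then show ?thesis
      unfolding gen_monoid_def by blast
  qed simp
qed

lemma compatible_selector_mixed_pair:
  assumes "compatible_selector f h" "h \<noteq> id" "h \<noteq> f"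
  obtains c d where "h c = c" "f c \<noteq> c" "h d = f d" "f d \<noteq> d" "c = f d \<or> d = f c"
proof -
  obtain c where "h c \<noteq> f c"
    using assms(3) by blast
  then have c: "h c = c" "f c \<noteq> c"
    using assms(1) unfolding compatible_selector_def by metis+
  obtain d where "h d \<noteq> d"
    using assms(2) by (metis eq_id_iff)
  then have d: "h d = f d" "f d \<noteq> d"
    using assms(1) unfolding compatible_selector_def by metis+
  have "c = f d \<or> d = f c"
    using assms(1) c d unfolding compatible_selector_def by blast
  with c d show ?thesis
    using that by blast
qed

lemma powers_f_or_const_if_idempotent:
  assumes "f \<circ> f = f"
  shows "powers_f_or_const f"
proof -
  have "f ^^ Suc k = f" for k
    using assms by (induction k) (simp_all add: comp_assoc)
  then show ?thesis
    unfolding powers_f_or_const_def by (metis gr0_conv_Suc)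
qed

lemma compatible_selector_idempotent:
  assumes "f \<circ> f = f" "compatible_selector f h"
  shows "h = id \<or> h = f"
proof (rule ccontr)
  assume "\<not> (h = id \<or> h = f)"
  then obtain c d where "f c \<noteq> c" "f d \<noteq> d" "c = f d \<or> d = f c"
    using compatible_selector_mixed_pair[OF assms(2)] by metis
  moreover have "f (f x) = f x" for x
    using assms(1) by (metis comp_apply)
  ultimately show False
    by metis
qed

lemma powers_f_or_const_if_square_const:
  assumes "f \<circ> f = (\<lambda>_. v)"
  shows "powers_f_or_const f"
proof -
  have "f ^^ k \<in> constmaps" if "2 \<le> k" for k
  proof -
    obtain j where "k = j + 2"
      using \<open>2 \<le> k\<close> by (metis add.commute le_Suc_ex)
    then have "f ^^ k = f ^^ j \<circ> (f \<circ> f)"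
      by (simp only: funpow_add) (simp add: numeral_2_eq_2)
    moreover have "f (f x) = v" for x
      using assms by (metis comp_apply)
    ultimately have "f ^^ k = (\<lambda>_. (f ^^ j) v)"
      by (simp add: comp_def)
    then show ?thesis
      unfolding constmaps_def by blast
  qed
  moreover have "f ^^ 1 = f"
    by simp
  ultimately show ?thesis
    unfolding powers_f_or_const_def by (metis One_nat_def Suc_1 Suc_leI le_neq_implies_less)
qed

lemma card_ge_3_obtain_other:
  assumes "3 \<le> card S"
  obtains k where "k \<in> S" "k \<noteq> a" "k \<noteq> b"
proof -
  have "\<not> S \<subseteq> {a, b}"
  proof
    assume "S \<subseteq> {a, b}"
    then have "card S \<le> card {a, b}"
      by (simp add: card_mono)
    also have "\<dots> \<le> 2"
      by (simp add: card_insert_le_m1)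
    finally show False
      using assms by simp
  qed
  then show ?thesis
    using that by blast
qed

(* Exactly one of the mixed pair c, d lies in the fibre of v; a third element k of that fibre
   cannot be sent to k (compatibility with d) nor to v (compatibility with c). *)
lemma compatible_selector_square_const:
  assumes "f \<circ> f = (\<lambda>_. v)" "3 \<le> card {x. f x = v}" "compatible_selector f h"
  shows "h = id \<or> h = f"
proof (rule ccontr)
  have ffv: "f (f x) = v" for x
    using assms(1) by (metis comp_apply)
  have fv: "f v = v"
    using ffv[of v] ffv[of "f v"] by simp
  have selects: "h x = x \<or> h x = f x"
    and mixed: "h c = c \<Longrightarrow> h d = f d \<Longrightarrow> c = f d \<or> d = f c \<or> f c = c \<or> f d = d" for x c d
    using assms(3) unfolding compatible_selector_def by blast+
  assume "\<not> (h = id \<or> h = f)"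
  then obtain c d where cd: "h c = c" "f c \<noteq> c" "h d = f d" "f d \<noteq> d"
    and cases: "c = f d \<or> d = f c"
    using compatible_selector_mixed_pair[OF assms(3)] by metis
  from cases show False
  proof
    assume cfd: "c = f d"
    obtain k where k: "k \<in> {x. f x = v}" "k \<noteq> v" "k \<noteq> c"
      by (rule card_ge_3_obtain_other[OF assms(2)])
    have "c \<noteq> v"
      using cd(2) cfd ffv by metis
    from selects[of k] show False
    proof
      assume "h k = k"
      with mixed[OF this cd(3)] show False
        using k cd cfd fv \<open>c \<noteq> v\<close> by auto
    next
      assume "h k = f k"
      with mixed[OF cd(1) this] show False
        using k cd cfd ffv \<open>c \<noteq> v\<close> by auto
    qed
  next
    assume dfc: "d = f c"
    obtain k where k: "k \<in> {x. f x = v}" "k \<noteq> v" "k \<noteq> d"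
      by (rule card_ge_3_obtain_other[OF assms(2)])
    from selects[of k] show False
    proof
      assume "h k = k"
      with mixed[OF this cd(3)] show False
        using k cd dfc ffv by auto
    next
      assume "h k = f k"
      with mixed[OF cd(1) this] show False
        using k cd dfc fv by auto
    qed
  qed
qed

lemma powers_f_or_const_if_type_I_or_II:
  assumes "type_I f \<or> type_II f"
  shows "powers_f_or_const f"
  using assms
proof
  assume "type_II f"
  then obtain v where "f \<circ> f = (\<lambda>_. v)"
    unfolding type_II_def by blast
  then show ?thesis
    by (rule powers_f_or_const_if_square_const)
qed (use powers_f_or_const_if_idempotent type_I_def in blast)

lemma End_Quord_subset_type_I_or_II:
  assumes "type_I f \<or> type_II f"
  shows "End (Quord (Mf f)) \<subseteq> Mf f"
proof (rule End_Quord_subset_if_compatible_selectors_trivial)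
  show "powers_f_or_const f"
    using assms by (rule powers_f_or_const_if_type_I_or_II)
next
  fix h assume h: "compatible_selector f h"
  from assms show "h = id \<or> h = f"
  proof
    assume "type_I f"
    then have "f \<circ> f = f"
      unfolding type_I_def .
    then show ?thesis
      using h by (rule compatible_selector_idempotent)
  next
    assume "type_II f"
    then obtain v where "f \<circ> f = (\<lambda>_. v)" "3 \<le> card {x. f x = v}"
      unfolding type_II_def by blast
    then show ?thesis
      using h by (rule compatible_selector_square_const)
  qed
qed

section \<open>Type III\<close>

lemma rtrancl_eq_reflcl_if_relcomp_empty:
  assumes "R O R = {}"
  shows "R\<^sup>* = R\<^sup>="
proof -
  have "trans R"
    using assms unfolding trans_def by blast
  then show ?thesis
    by (simp add: rtrancl_trancl_reflcl)
qed

lemma orbit_edges_relcomp_empty: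
  assumes "orbit_of f a \<inter> orbit_of f b = {}"
  shows "orbit_edges f a b O orbit_edges f a b = {}"
proof -
  have "orbit_edges f a b \<subseteq> orbit_of f a \<times> orbit_of f b"
    unfolding orbit_edges_def orbit_of_def by blast
  then show ?thesis
    using assms by blast
qed

lemma End_Quord_on_disjoint_orbits:
  assumes "h \<in> End (Quord (Mf f))" "h \<notin> constmaps" "orbit_of f a \<inter> orbit_of f b = {}"
  shows "\<exists>k. h a = (f ^^ k) a \<and> h b = (f ^^ k) b"
proof -
  have "h a \<in> orbit_of f a" "h b \<in> orbit_of f b"
    by (rule End_Quord_apply_in_orbit[OF assms(1,2)])+
  then have "h a \<noteq> h b"
    using assms(3) by (metis IntI empty_iff)
  moreover have "(h a, h b) \<in> (orbit_edges f a b)\<^sup>="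
    using End_Quord_pair_in_rtrancl[OF assms(1), of a b]
    unfolding rtrancl_eq_reflcl_if_relcomp_empty[OF orbit_edges_relcomp_empty[OF assms(3)]] .
  ultimately have "(h a, h b) \<in> orbit_edges f a b"
    by simp
  then show ?thesis
    unfolding orbit_edges_def by blast
qed

lemma End_Quord_subset_type_III:
  assumes "type_III f"
  shows "End (Quord (Mf f)) \<subseteq> Mf f"
proof
  obtain p x y where p: "prime p" "f ^^ p = id"
    and card: "card (orbit_of f x) = p" "card (orbit_of f y) = p"
    and distinct: "orbit_of f x \<noteq> orbit_of f y"
    using assms unfolding type_III_def by blast
  have "0 < p"
    using p(1) prime_gt_0_nat by blast
  have disjoint_or_eq: "orbit_of f u \<inter> orbit_of f w = {} \<or> orbit_of f u = orbit_of f w" for u w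
    using orbit_of_eq_if_Int[OF p(2) \<open>0 < p\<close>] by blast
  have moved: "f w \<noteq> w" if "w = x \<or> w = y" for w
    using that card orbit_of_fixed_point[of f w] prime_gt_1_nat[OF p(1)] by auto
  fix h assume h: "h \<in> End (Quord (Mf f))"
  show "h \<in> Mf f"
  proof (cases "h \<in> constmaps")
    case False
    obtain k where k: "h x = (f ^^ k) x" "h y = (f ^^ k) y"
      using End_Quord_on_disjoint_orbits[OF h False] disjoint_or_eq[of x y] distinct by blast
    have "h z = (f ^^ k) z" for z
    proof -
      obtain w where w: "w = x \<or> w = y" "orbit_of f w \<inter> orbit_of f z = {}"
        using disjoint_or_eq[of x z] disjoint_or_eq[of y z] distinct by metis
      obtain l where l: "h w = (f ^^ l) w" "h z = (f ^^ l) z"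
        using End_Quord_on_disjoint_orbits[OF h False w(2)] by blast
      have "f ^^ k = f ^^ l"
        using funpow_eq_if_agree_at_moved_point[OF p moved[OF w(1)]] w(1) k l by metis
      then show ?thesis
        using l by simp
    qed
    then have "h = f ^^ k"
      by blast
    then show ?thesis
      unfolding gen_monoid_def by blast
  qed simp
qed

section \<open>Minimality\<close>

lemma funpow_generates_self:
  assumes "type_I f \<or> type_II f \<or> type_III f" "f ^^ k \<notin> Tset"
  shows "\<exists>j. (f ^^ k) ^^ j = f"
proof -
  have not_id: "f ^^ k \<noteq> id" and not_const: "f ^^ k \<notin> constmaps"
    using assms(2) unfolding Tset_def by simp_all
  show ?thesis
  proof (cases "type_III f")
    case True
    then obtain p where "prime p" "f ^^ p = id"
      unfolding type_III_def by blast
    then show ?thesis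
      using funpow_generates_prime_order not_id by blast
  next
    case False
    then have "powers_f_or_const f"
      using assms(1) powers_f_or_const_if_type_I_or_II by blast
    moreover have "0 < k"
      using not_id by (rule contrapos_np) simp
    ultimately have "f ^^ k = f"
      using not_const unfolding powers_f_or_const_def by blast
    then have "(f ^^ k) ^^ 1 = f"
      by simp
    then show ?thesis ..
  qed
qed

lemma minimal_u_closed_if_powers_generate:
  assumes "f \<notin> Tset" "u_closed (Mf f)" "\<And>k. f ^^ k \<notin> Tset \<Longrightarrow> \<exists>j. (f ^^ k) ^^ j = f"
  shows "minimal_u_closed (Mf f)"
  unfolding minimal_u_closed_def
proof (intro conjI allI impI)
  show "u_closed (Mf f)"
    by (rule assms(2))
next
  have "f ^^ 1 \<in> gen_monoid f"
    unfolding gen_monoid_def by (rule rangeI)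
  then have "f \<in> Mf f"
    by simp
  then show "Tset \<subset> Mf f"
    using Tset_subset_if_u_closed[OF assms(2)] assms(1) by blast
next
  fix M assume M: "u_closed M \<and> M \<subset> Mf f"
  then have "is_monoid M" "Tset \<subseteq> M"
    using Tset_subset_if_u_closed unfolding u_closed_def by blast+
  show "M = Tset"
  proof (rule ccontr)
    assume "M \<noteq> Tset"
    then obtain g where g: "g \<in> M" "g \<notin> Tset"
      using \<open>Tset \<subseteq> M\<close> by blast
    then obtain k where "g = f ^^ k"
      using M unfolding Tset_def gen_monoid_def by blast
    then obtain j where "g ^^ j = f"
      using assms(3) g(2) by blast
    then have "f \<in> M"
      using funpow_in_monoid[OF \<open>is_monoid M\<close> g(1), of j] by simp
    then have "Mf f \<subseteq> M"
      using gen_monoid_subset[OF \<open>is_monoid M\<close>] \<open>Tset \<subseteq> M\<close> unfolding Tset_def by blast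
    then show False
      using M by blast
  qed
qed

theorem proposition5p2:
  fixes f :: "'a::finite \<Rightarrow> 'a"
  assumes "f \<notin> Tset"
    and "type_I f \<or> type_II f \<or> type_III f"
  shows "minimal_u_closed (gen_monoid f \<union> constmaps)
    \<and> uclosure (gen_monoid f \<union> constmaps) = gen_monoid f \<union> constmaps
    \<and> End (gQuord (gen_monoid f \<union> constmaps)) = End (Quord (gen_monoid f \<union> constmaps))"
proof -
  have End_subset: "End (Quord (Mf f)) \<subseteq> Mf f"
    using assms(2) End_Quord_subset_type_I_or_II End_Quord_subset_type_III by blast
  then have "Mf f = End (Quord (Mf f))"
    unfolding End_def Quord_def by blast
  then have "is_clone (Nstar (Mf f))"
    using is_clone_Nstar_End[of "Quord (Mf f)"] unfolding Quord_def by simp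
  then have closure: "uclosure (Mf f) = Mf f"
    using uclosure_eq_if_is_clone is_monoid_Un_constmaps is_monoid_gen_monoid by blast
  then have "u_closed (Mf f)"
    unfolding u_closed_def using is_monoid_Un_constmaps is_monoid_gen_monoid by blast
  then have "minimal_u_closed (Mf f)"
    using minimal_u_closed_if_powers_generate assms funpow_generates_self by blast
  with closure End_gQuord_eq_End_Quord[OF End_subset] show ?thesis
    by blast
qed

end
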